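(* Let $X=\mathbb{C}^n$ and consider $u'(t)=F(u(t))=Lu(t)+N(u(t))$, $u(t_0)=u_0$, satisfying Assumptions 1 and 3 below. Assume that $\operatorname{Re}(u,Lu)\le0$ for all $u\in X$ and that $L\frac{d}{dt}N(u(t))\big|_{t=t_n}$ is uniformly bounded on $X$. Consider the two schemes with constant step $h$: $$\text{(HImExp2J)}\quad U_{n2}=u_n+\tfrac12h(I-\tfrac12hL)^{-1}F(u_n),\quad u_{n+1}=u_n+h(I-\tfrac12hL)^{-1}F(u_n)+2h\varphi_2(hJ_n)\big(N(U_{n2})-N(u_n)\big),$$ $$\text{(HImExp2N)}\quad U_{n2}=u_n+\tfrac12h(I-\tfrac12hL)^{-1}F(u_n),\quad u_{n+1}=u_n+h(I-\tfrac12hL)^{-1}F(u_n)+2h\varphi_2(hN'_n)\big(N(U_{n2})-N(u_n)\big),$$ where $N'_n=N'(u_n)$ and $J_n=L+N'_n$. Then both schemes have order of consistency 3, i.e. the local error $\bar u_{n+1}-u(t_{n+1})$, where $\bar u_{n+1}$ is obtained by one step of the scheme from $u_n=u(t_n)$, is $\mathcal{O}(h^3)$.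
   Context: $\varphi_2(z)=\int_0^1 e^{(1-\theta)z}\theta\,d\theta$. $(\cdot,\cdot)$ is the standard inner product on $\mathbb{C}^n$. Assumption 1: $L$ is the generator of a strongly continuous semigroup $e^{tL}$ on $X$. Assumption 3: the problem possesses a solution that is three times differentiable with uniformly bounded derivatives in $X$, and $N:X\to X$ is twice continuously Fréchet differentiable in a strip along the exact solution. $\mathcal{O}(h^3)$ denotes a term bounded by $Ch^3$ with $C$ independent of $h$ and $n$. *)

theory Defs
  imports "HOL-Analysis.Analysis"
begin

text \<open>The state space X = C^n is rendered as complex^'n (finite index type 'n).
Linear operators are bounded (real-)linear maps, type blinfun.\<close>

definition op_exp :: "('v \<Rightarrow>\<^sub>L 'v::banach) \<Rightarrow> 'v \<Rightarrow> 'v" where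
  "op_exp A v = (\<Sum>k. (1 / fact k) *\<^sub>R ((blinfun_apply A ^^ k) v))"

definition phi2 :: "((complex^'n) \<Rightarrow>\<^sub>L (complex^'n)) \<Rightarrow> complex^'n \<Rightarrow> complex^'n" where
  "phi2 A v = integral {0..1} (\<lambda>\<theta>::real. \<theta> *\<^sub>R op_exp ((1 - \<theta>) *\<^sub>R A) v)"

definition resolv :: "real \<Rightarrow> ((complex^'n) \<Rightarrow>\<^sub>L (complex^'n)) \<Rightarrow> complex^'n \<Rightarrow> complex^'n" where
  "resolv h L v = (THE w. w - (h/2) *\<^sub>R blinfun_apply L w = v)"

definition himexp2_step ::
  "((complex^'n) \<Rightarrow>\<^sub>L (complex^'n)) \<Rightarrow> (complex^'n \<Rightarrow> complex^'n)
   \<Rightarrow> (complex^'n \<Rightarrow> ((complex^'n) \<Rightarrow>\<^sub>L (complex^'n))) \<Rightarrow> real \<Rightarrow> complex^'n \<Rightarrow> complex^'n" where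
  "himexp2_step L N A h un =
     (let w = resolv h L (blinfun_apply L un + N un);
          U2 = un + (h/2) *\<^sub>R w
      in un + h *\<^sub>R w + (2*h) *\<^sub>R phi2 (h *\<^sub>R A un) (N U2 - N un))"

definition himexp2J_step ::
  "((complex^'n) \<Rightarrow>\<^sub>L (complex^'n)) \<Rightarrow> (complex^'n \<Rightarrow> complex^'n)
   \<Rightarrow> (complex^'n \<Rightarrow> ((complex^'n) \<Rightarrow>\<^sub>L (complex^'n))) \<Rightarrow> real \<Rightarrow> complex^'n \<Rightarrow> complex^'n" where
  "himexp2J_step L N N' h un = himexp2_step L N (\<lambda>v. L + N' v) h un"

definition himexp2N_step ::
  "((complex^'n) \<Rightarrow>\<^sub>L (complex^'n)) \<Rightarrow> (complex^'n \<Rightarrow> complex^'n)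
   \<Rightarrow> (complex^'n \<Rightarrow> ((complex^'n) \<Rightarrow>\<^sub>L (complex^'n))) \<Rightarrow> real \<Rightarrow> complex^'n \<Rightarrow> complex^'n" where
  "himexp2N_step L N N' h un = himexp2_step L N N' h un"

end

theory Submission
  imports Defs
begin

text \<open>On \<open>\<complex>\<^sup>n\<close> the operator \<open>L\<close> is bounded, so for \<open>h\<parallel>L\<parallel> \<le> 1\<close> the stage vector
  \<open>w = (I - h/2 L)\<^sup>-\<^sup>1 F(u\<^sub>n)\<close> satisfies \<open>w = F + (h/2) L w\<close> and \<open>\<parallel>w\<parallel> \<le> 2\<parallel>F\<parallel>\<close>, while
  \<open>\<phi>\<^sub>2(hA) = 1/2 + O(h)\<close> and \<open>N(U\<^sub>n\<^sub>2) - N(u\<^sub>n) = (h/2) N'(u\<^sub>n) w + O(h\<^sup>2)\<close>. Hence one step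
  equals \<open>u\<^sub>n + hF + (h\<^sup>2/2)(LF + N'(u\<^sub>n)F) + O(h\<^sup>3)\<close>, the Taylor polynomial of the exact
  solution, since \<open>u'' = Lu' + N'(u)u'\<close>. The constants depend on \<open>\<parallel>L\<parallel>\<close>.\<close>

subsection \<open>Taylor remainders along a curve\<close>

lemma norm_diff_le_vector_derivative_bound:
  fixes f :: "real \<Rightarrow> 'a::real_normed_vector"
  assumes "a \<le> b"
    and "\<And>x. x \<in> {a..b} \<Longrightarrow> (f has_vector_derivative f' x) (at x within {a..b})"
    and "\<And>x. x \<in> {a..b} \<Longrightarrow> norm (f' x) \<le> B"
  shows "norm (f b - f a) \<le> B * (b - a)"
proof -
  have "norm (f b - f a) \<le> B * norm (b - a)"
    by (rule differentiable_bound[of "{a..b}" f "\<lambda>x h. h *\<^sub>R f' x" B b a])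
      (use assms in \<open>auto simp: has_vector_derivative_def
        onorm_scaleR_left[OF bounded_linear_ident] onorm_id\<close>)
  then show ?thesis using assms(1) by simp
qed

lemma has_vector_derivative_power_scaleR:
  "((\<lambda>y. ((y - a) ^ Suc k / real (Suc k)) *\<^sub>R v) has_vector_derivative (x - a) ^ k *\<^sub>R v)
     (at x within S)"
proof -
  have "((\<lambda>y. (y - a) ^ Suc k / real (Suc k)) has_real_derivative (x - a) ^ k) (at x within S)"
    by (auto intro!: derivative_eq_intros)
      (cases k, auto simp: field_simps power_Suc[symmetric] simp del: power_Suc)
  from has_vector_derivative_scaleR[OF this has_vector_derivative_const[of v]] show ?thesis
    by simp
qed

lemma taylor1_remainder_bound:
  fixes f :: "real \<Rightarrow> 'a::real_normed_vector"
  assumes f': "\<And>x. x \<in> {a..b} \<Longrightarrow> (f has_vector_derivative f' x) (at x within {a..b})"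
    and f'': "\<And>x. x \<in> {a..b} \<Longrightarrow> (f' has_vector_derivative f'' x) (at x within {a..b})"
    and B: "\<And>x. x \<in> {a..b} \<Longrightarrow> norm (f'' x) \<le> B"
    and x: "x \<in> {a..b}"
  shows "norm (f x - f a - (x - a) *\<^sub>R f' a) \<le> B * (x - a)\<^sup>2"
proof -
  have a: "a \<in> {a..b}" using x by auto
  have "norm (f' y - f' a) \<le> B * (x - a)" if "y \<in> {a..x}" for y
  proof -
    have "norm (f' y - f' a) \<le> B * (y - a)"
      by (rule norm_diff_le_vector_derivative_bound)
        (use that x in \<open>auto intro: B has_vector_derivative_within_subset[OF f'']\<close>)
    also have "\<dots> \<le> B * (x - a)"
      using that B[OF a] by (intro mult_left_mono) (auto intro: order_trans[OF norm_ge_zero])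
    finally show ?thesis .
  qed
  then have "norm ((f x - (x - a) *\<^sub>R f' a) - (f a - (a - a) *\<^sub>R f' a)) \<le> B * (x - a) * (x - a)"
    using x has_vector_derivative_power_scaleR[of a 0 "f' a"]
    by (intro norm_diff_le_vector_derivative_bound)
      (auto intro!: has_vector_derivative_diff has_vector_derivative_within_subset[OF f'])
  then show ?thesis by (simp add: power2_eq_square algebra_simps)
qed

lemma taylor2_remainder_bound:
  fixes f :: "real \<Rightarrow> 'a::real_normed_vector"
  assumes f': "\<And>x. x \<in> {a..b} \<Longrightarrow> (f has_vector_derivative f' x) (at x within {a..b})"
    and f'': "\<And>x. x \<in> {a..b} \<Longrightarrow> (f' has_vector_derivative f'' x) (at x within {a..b})"
    and f''': "\<And>x. x \<in> {a..b} \<Longrightarrow> (f'' has_vector_derivative f''' x) (at x within {a..b})"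
    and B: "\<And>x. x \<in> {a..b} \<Longrightarrow> norm (f''' x) \<le> B"
    and "a \<le> b"
  shows "norm (f b - f a - (b - a) *\<^sub>R f' a - ((b - a)\<^sup>2 / 2) *\<^sub>R f'' a) \<le> B * (b - a) ^ 3"
proof -
  have "norm (f' y - f' a - (y - a) *\<^sub>R f'' a) \<le> B * (b - a)\<^sup>2" if y: "y \<in> {a..b}" for y
  proof -
    have "norm (f' y - f' a - (y - a) *\<^sub>R f'' a) \<le> B * (y - a)\<^sup>2"
      by (rule taylor1_remainder_bound[OF f'' f''' B y])
    also have "\<dots> \<le> B * (b - a)\<^sup>2"
      using y B[of a] \<open>a \<le> b\<close>
      by (intro mult_left_mono power_mono) (auto intro: order_trans[OF norm_ge_zero])
    finally show ?thesis .
  qed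
  then have "norm ((f b - (b - a) *\<^sub>R f' a - ((b - a) ^ 2 / 2) *\<^sub>R f'' a)
                  - (f a - (a - a) *\<^sub>R f' a - ((a - a) ^ 2 / 2) *\<^sub>R f'' a)) \<le> B * (b - a)\<^sup>2 * (b - a)"
    using \<open>a \<le> b\<close> has_vector_derivative_power_scaleR[of a 0 "f' a"]
      has_vector_derivative_power_scaleR[of a 1 "f'' a"]
    by (intro norm_diff_le_vector_derivative_bound)
      (auto simp: numeral_2_eq_2 intro!: has_vector_derivative_diff f')
  then show ?thesis by (simp add: power2_eq_square power3_eq_cube algebra_simps)
qed

subsection \<open>The operator exponential and \<open>\<phi>\<^sub>2\<close>\<close>

lemma blinfun_power_scaleR:
  fixes C :: "'a::real_normed_vector \<Rightarrow>\<^sub>L 'a"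
  shows "(blinfun_apply (s *\<^sub>R C) ^^ k) v = s ^ k *\<^sub>R (blinfun_apply C ^^ k) v"
  by (induction k) (auto simp: blinfun.scaleR_right blinfun.scaleR_left)

lemma norm_blinfun_power_le:
  fixes C :: "'a::real_normed_vector \<Rightarrow>\<^sub>L 'a"
  shows "norm ((blinfun_apply C ^^ k) v) \<le> norm C ^ k * norm v"
proof (induction k)
  case (Suc k)
  have "norm ((blinfun_apply C ^^ Suc k) v) \<le> norm C * norm ((blinfun_apply C ^^ k) v)"
    by (simp add: norm_blinfun)
  also have "\<dots> \<le> norm C * (norm C ^ k * norm v)"
    by (rule mult_left_mono[OF Suc]) simp
  finally show ?case by (simp add: algebra_simps)
qed simp

lemma exp_series_sums: "(\<lambda>k. x ^ k / fact k :: real) sums exp x"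
  using exp_converges[of x] by (simp add: field_simps)

lemma summable_op_exp_series:
  fixes C :: "'a::banach \<Rightarrow>\<^sub>L 'a"
  shows "summable (\<lambda>k. (1 / fact k) *\<^sub>R (blinfun_apply C ^^ k) v)"
proof (rule summable_norm_cancel, rule summable_comparison_test)
  show "summable (\<lambda>k. norm C ^ k / fact k * norm v)"
    using exp_series_sums by (intro summable_mult2 sums_summable)
  show "\<exists>N. \<forall>k\<ge>N. norm (norm ((1 / fact k) *\<^sub>R (blinfun_apply C ^^ k) v)) \<le> norm C ^ k / fact k * norm v"
    using norm_blinfun_power_le[where C=C and v=v] by (auto simp: divide_simps)
qed

lemma norm_op_exp_minus_le:
  fixes C :: "'a::banach \<Rightarrow>\<^sub>L 'a"
  shows "norm (op_exp C v - v) \<le> norm C * exp (norm C) * norm v"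
proof -
  let ?f = "\<lambda>k. (1 / fact k) *\<^sub>R (blinfun_apply C ^^ k) v"
  have "op_exp C v - v = (\<Sum>k. ?f (Suc k))"
    using suminf_split_head[OF summable_op_exp_series[of C v]] by (simp add: op_exp_def)
  also have "norm \<dots> \<le> (\<Sum>k. norm C * (norm C ^ k / fact k) * norm v)"
  proof (rule norm_suminf_le)
    fix k
    have "norm (?f (Suc k)) \<le> norm C ^ Suc k / fact (Suc k) * norm v"
      using norm_blinfun_power_le[where C=C and k="Suc k" and v=v] by (simp add: divide_simps)
    also have "\<dots> \<le> norm C * (norm C ^ k / fact k) * norm v"
      using mult_left_mono[of 1 "1 + real k" "norm C * norm C ^ k"]
      by (intro mult_right_mono) (simp_all add: divide_simps)
    finally show "norm (?f (Suc k)) \<le> norm C * (norm C ^ k / fact k) * norm v" .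
  qed (use exp_series_sums in \<open>intro summable_mult2 summable_mult sums_summable\<close>)
  also have "\<dots> = norm C * exp (norm C) * norm v"
    using sums_unique[OF sums_mult2[OF sums_mult[OF exp_series_sums]]] by simp
  finally show ?thesis .
qed

lemma continuous_on_op_exp_scaleR:
  fixes C :: "'a::banach \<Rightarrow>\<^sub>L 'a"
  shows "continuous_on {0..1} (\<lambda>s::real. op_exp (s *\<^sub>R C) v)"
proof -
  let ?t = "\<lambda>k (s::real). (1 / fact k) *\<^sub>R (s ^ k *\<^sub>R (blinfun_apply C ^^ k) v)"
  have ul: "uniform_limit {0..1} (\<lambda>n s. \<Sum>k<n. ?t k s) (\<lambda>s. \<Sum>k. ?t k s) sequentially"
  proof (rule Weierstrass_m_test)
    fix k and s :: real assume "s \<in> {0..1}"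
    then have "\<bar>s\<bar> ^ k * norm ((blinfun_apply C ^^ k) v) / fact k \<le> 1 * (norm C ^ k * norm v) / fact k"
      by (intro divide_right_mono mult_mono norm_blinfun_power_le) (auto intro: power_le_one)
    then show "norm (?t k s) \<le> norm C ^ k / fact k * norm v"
      by (simp add: power_abs)
  qed (use exp_series_sums in \<open>intro summable_mult2 sums_summable\<close>)
  have "continuous_on {0..1} (\<lambda>s. \<Sum>k. ?t k s)"
    by (rule uniform_limit_theorem[OF _ ul]) (auto intro!: always_eventually continuous_intros)
  then show ?thesis
    by (simp add: op_exp_def blinfun_power_scaleR)
qed

text \<open>Subtract \<open>\<integral>\<^sub>0\<^sup>1 \<theta> v d\<theta> = v/2\<close> under the integral.\<close>
lemma norm_phi2_minus_half_le:
  fixes B :: "(complex^'n) \<Rightarrow>\<^sub>L (complex^'n)"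
  shows "norm (phi2 B v - (1/2) *\<^sub>R v) \<le> norm B * exp (norm B) * norm v"
proof -
  let ?f = "\<lambda>\<theta>::real. \<theta> *\<^sub>R op_exp ((1 - \<theta>) *\<^sub>R B) v"
  have "continuous_on {0..1} (\<lambda>\<theta>::real. op_exp ((1 - \<theta>) *\<^sub>R B) v)"
    by (rule continuous_on_compose2[OF continuous_on_op_exp_scaleR[of B v]])
      (auto intro!: continuous_intros)
  then have "(?f has_integral phi2 B v) {0..1}"
    unfolding phi2_def
    by (intro integrable_integral integrable_continuous_real continuous_on_scaleR continuous_on_id)
  moreover have "((\<lambda>\<theta>::real. \<theta> *\<^sub>R v) has_integral (1/2) *\<^sub>R v) {0..1}"
  proof -
    have "((\<lambda>\<theta>::real. \<theta>) has_integral (1 ^ 2 / 2 - 0 ^ 2 / 2)) {0..1}"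
      by (rule fundamental_theorem_of_calculus)
        (auto intro!: derivative_eq_intros simp: has_real_derivative_iff_has_vector_derivative[symmetric])
    from has_integral_scaleR_left[OF this, of v] show ?thesis by simp
  qed
  ultimately have int: "((\<lambda>\<theta>. ?f \<theta> - \<theta> *\<^sub>R v) has_integral (phi2 B v - (1/2) *\<^sub>R v)) {0..1}"
    by (rule has_integral_diff)
  have bnd: "norm (?f \<theta> - \<theta> *\<^sub>R v) \<le> norm B * exp (norm B) * norm v" if "\<theta> \<in> {0..1}" for \<theta>
  proof -
    have nB: "norm ((1 - \<theta>) *\<^sub>R B) \<le> norm B"
      using that by (auto intro: mult_left_le_one_le)
    have "norm (?f \<theta> - \<theta> *\<^sub>R v) = \<theta> * norm (op_exp ((1 - \<theta>) *\<^sub>R B) v - v)"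
      using that by (simp flip: scaleR_diff_right)
    also have "\<dots> \<le> 1 * (norm ((1 - \<theta>) *\<^sub>R B) * exp (norm ((1 - \<theta>) *\<^sub>R B)) * norm v)"
      using that by (intro mult_mono norm_op_exp_minus_le) auto
    also have "\<dots> \<le> norm B * exp (norm B) * norm v"
      using nB by (simp add: mult_mono)
    finally show ?thesis .
  qed
  show ?thesis
    using has_integral_bound_real[OF _ finite.emptyI int, of "norm B * exp (norm B) * norm v"] bnd
    by simp
qed

lemma norm_phi2_scaled_minus_half_le:
  fixes B :: "(complex^'n) \<Rightarrow>\<^sub>L (complex^'n)"
  assumes "0 \<le> h" "h \<le> 1" "norm B \<le> K"
  shows "norm (phi2 (h *\<^sub>R B) v - (1/2) *\<^sub>R v) \<le> h * K * exp K * norm v"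
proof -
  have "norm (h *\<^sub>R B) \<le> h * K"
    using assms by (simp add: mult_left_mono)
  moreover have "h * K \<le> K"
    using assms order_trans[OF norm_ge_zero assms(3)] by (simp add: mult_left_le_one_le)
  ultimately have "norm (h *\<^sub>R B) * exp (norm (h *\<^sub>R B)) * norm v \<le> h * K * exp K * norm v"
    using assms(1) order_trans[OF norm_ge_zero assms(3)]
    by (intro mult_mono) (auto simp del: norm_scaleR)
  with norm_phi2_minus_half_le[of "h *\<^sub>R B" v] show ?thesis by linarith
qed

subsection \<open>The resolvent \<open>(I - h/2 L)\<^sup>-\<^sup>1\<close>\<close>

lemma norm_half_step_le:
  assumes "0 \<le> h" "h * norm L \<le> 1"
  shows "norm ((h/2) *\<^sub>R blinfun_apply L z) \<le> norm z / 2"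
proof -
  have "norm ((h/2) *\<^sub>R blinfun_apply L z) \<le> (h/2) * (norm L * norm z)"
    using assms by (simp add: norm_blinfun mult_left_mono)
  also have "\<dots> \<le> 1 * norm z / 2"
    using mult_right_mono[OF assms(2) norm_ge_zero, of z] by simp
  finally show ?thesis by simp
qed

lemma resolv_solves:
  fixes L :: "(complex^'n) \<Rightarrow>\<^sub>L (complex^'n)"
  assumes "0 \<le> h" "h * norm L \<le> 1"
  shows "resolv h L v - (h/2) *\<^sub>R blinfun_apply L (resolv h L v) = v"
proof -
  let ?f = "\<lambda>w. w - (h/2) *\<^sub>R blinfun_apply L w"
  have "linear ?f"
    by (simp add: linear_iff blinfun.add_right blinfun.scaleR_right algebra_simps)
  moreover have "inj ?f"
  proof (rule injI)
    fix x y assume "?f x = ?f y"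
    then have "x - y = (h/2) *\<^sub>R blinfun_apply L (x - y)"
      by (simp add: blinfun.diff_right algebra_simps)
    then have "norm (x - y) \<le> norm (x - y) / 2"
      using norm_half_step_le[OF assms, of "x - y"] by simp
    then show "x = y" by simp
  qed
  ultimately have "surj ?f"
    by (rule linear_inj_imp_surj)
  then obtain w where "v = ?f w"
    by (blast dest: surjD)
  then have w: "?f w = v" ..
  have "resolv h L v = w"
    unfolding resolv_def using w \<open>inj ?f\<close> by (auto intro!: the_equality dest: injD)
  with w show ?thesis by simp
qed

lemma norm_resolv_le:
  fixes L :: "(complex^'n) \<Rightarrow>\<^sub>L (complex^'n)"
  assumes "0 \<le> h" "h * norm L \<le> 1"
  shows "norm (resolv h L v) \<le> 2 * norm v"
proof -
  let ?w = "resolv h L v"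
  have "?w = v + (h/2) *\<^sub>R blinfun_apply L ?w"
    using resolv_solves[OF assms, of v] by (simp add: algebra_simps)
  then have "norm ?w \<le> norm v + norm ((h/2) *\<^sub>R blinfun_apply L ?w)"
    by (metis norm_triangle_ineq)
  then show ?thesis
    using norm_half_step_le[OF assms, of ?w] by simp
qed

subsection \<open>Taylor expansion of the nonlinearity\<close>

lemma norm_diff_le_of_blinfun_derivative_bound:
  fixes N :: "'a::real_normed_vector \<Rightarrow> 'b::real_normed_vector"
  assumes "convex S"
    and "\<And>y. y \<in> S \<Longrightarrow> (N has_derivative blinfun_apply (N' y)) (at y)"
    and "\<And>y. y \<in> S \<Longrightarrow> norm (N' y) \<le> M"
    and "x \<in> S" "y \<in> S"
  shows "norm (N y - N x) \<le> M * norm (y - x)"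
  using differentiable_bound[OF assms(1) _ _ assms(5,4), of N "\<lambda>y. blinfun_apply (N' y)" M] assms(2,3)
  by (auto intro: has_derivative_at_withinI simp flip: norm_blinfun.rep_eq)

lemma norm_linearization_error_le:
  fixes N :: "'a::real_normed_vector \<Rightarrow> 'b::real_normed_vector"
  assumes S: "convex S"
    and N: "\<And>y. y \<in> S \<Longrightarrow> (N has_derivative blinfun_apply (N' y)) (at y)"
    and N': "\<And>y. y \<in> S \<Longrightarrow> (N' has_derivative blinfun_apply (N'' y)) (at y)"
    and M: "\<And>y. y \<in> S \<Longrightarrow> norm (N'' y) \<le> M"
    and x: "x \<in> S" and y: "y \<in> S"
  shows "norm (N y - N x - blinfun_apply (N' x) (y - x)) \<le> M * (norm (y - x))\<^sup>2"
proof -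
  let ?S = "S \<inter> cball x (norm (y - x))"
  have "convex ?S" "x \<in> ?S" "y \<in> ?S"
    using S x y by (auto simp: convex_Int dist_norm norm_minus_commute)
  have "norm (N y - N x - blinfun_apply (N' x) (y - x)) \<le> norm (y - x) * (M * norm (y - x))"
  proof (rule differentiable_bound_linearization[where S="?S" and f'="\<lambda>z. blinfun_apply (N' z)"])
    show "x + t *\<^sub>R (y - x) \<in> ?S" if "t \<in> {0..1}" for t
      using convexD_alt[OF \<open>convex ?S\<close> \<open>x \<in> ?S\<close> \<open>y \<in> ?S\<close>, of t] that by (simp add: algebra_simps)
    fix z assume z: "z \<in> ?S"
    then show "(N has_derivative blinfun_apply (N' z)) (at z within ?S)"
      using N by (auto intro: has_derivative_at_withinI)
    have "onorm (blinfun_apply (N' z) - blinfun_apply (N' x)) = norm (N' z - N' x)"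
      by (simp add: norm_blinfun.rep_eq minus_blinfun.rep_eq fun_diff_def)
    also have "\<dots> \<le> M * norm (z - x)"
      using z N' M \<open>convex ?S\<close> \<open>x \<in> ?S\<close>
      by (intro norm_diff_le_of_blinfun_derivative_bound[where S="?S"]) auto
    also have "\<dots> \<le> M * norm (y - x)"
      using z M[OF x]
      by (intro mult_left_mono) (auto simp: dist_norm norm_minus_commute intro: order_trans[OF norm_ge_zero])
    finally show "onorm (blinfun_apply (N' z) - blinfun_apply (N' x)) \<le> M * norm (y - x)" .
  qed (rule \<open>x \<in> ?S\<close>)
  then show ?thesis by (simp add: power2_eq_square algebra_simps)
qed

lemma norm_nonlinear_increment_le:
  fixes N :: "'a::real_normed_vector \<Rightarrow> 'b::real_normed_vector"
  assumes N: "\<And>y. y \<in> cball x r \<Longrightarrow> (N has_derivative blinfun_apply (N' y)) (at y)"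
    and N': "\<And>y. y \<in> cball x r \<Longrightarrow> (N' has_derivative blinfun_apply (N'' y)) (at y)"
    and M1: "\<And>y. y \<in> cball x r \<Longrightarrow> norm (N' y) \<le> M1"
    and M2: "\<And>y. y \<in> cball x r \<Longrightarrow> norm (N'' y) \<le> M2"
    and d: "norm d \<le> \<rho>" "\<rho> \<le> r"
  shows "norm (N (x + d) - N x) \<le> M1 * \<rho>"
    and "norm (N (x + d) - N x - blinfun_apply (N' x) d) \<le> M2 * \<rho>\<^sup>2"
proof -
  have x: "x \<in> cball x r" and xd: "x + d \<in> cball x r"
    using d order_trans[OF norm_ge_zero d(1)] by (auto simp: dist_norm)
  have "norm (N (x + d) - N x) \<le> M1 * norm d"
    using norm_diff_le_of_blinfun_derivative_bound[OF convex_cball N M1 x xd] by simp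
  also have "\<dots> \<le> M1 * \<rho>"
    using d(1) M1[OF x] by (intro mult_left_mono) (auto intro: order_trans[OF norm_ge_zero])
  finally show "norm (N (x + d) - N x) \<le> M1 * \<rho>" .
  have "norm (N (x + d) - N x - blinfun_apply (N' x) d) \<le> M2 * (norm d)\<^sup>2"
    using norm_linearization_error_le[OF convex_cball N N' M2 x xd] by simp
  also have "\<dots> \<le> M2 * \<rho>\<^sup>2"
    using d(1) M2[OF x] by (intro mult_left_mono power_mono) (auto intro: order_trans[OF norm_ge_zero])
  finally show "norm (N (x + d) - N x - blinfun_apply (N' x) d) \<le> M2 * \<rho>\<^sup>2" .
qed

subsection \<open>The exact solution\<close>

lemma bounded_on_tube:
  fixes u :: "real \<Rightarrow> 'a::euclidean_space" and g :: "'a \<Rightarrow> 'b::real_normed_vector"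
  assumes u: "continuous_on {a..b} u" and "0 < r"
    and g: "continuous_on {v. \<exists>t\<in>{a..b}. dist v (u t) < r} g"
  shows "\<exists>M. \<forall>t\<in>{a..b}. \<forall>v\<in>cball (u t) (r/2). norm (g v) \<le> M"
proof -
  let ?K = "(\<lambda>p. u (fst p) + snd p) ` ({a..b} \<times> cball 0 (r/2))"
  have "continuous_on ({a..b} \<times> cball 0 (r/2)) (\<lambda>p. u (fst p) + snd p)"
    by (intro continuous_intros continuous_on_compose2[OF u]) auto
  then have K: "compact ?K"
    by (intro compact_continuous_image compact_Times compact_Icc compact_cball)
  have "?K \<subseteq> {v. \<exists>t\<in>{a..b}. dist v (u t) < r}"
    using \<open>0 < r\<close> by (force simp: dist_norm)
  then have "bounded (g ` ?K)"
    using compact_imp_bounded[OF compact_continuous_image[OF continuous_on_subset[OF g] K]] by blast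
  then obtain M where M: "\<forall>v\<in>?K. norm (g v) \<le> M"
    by (auto simp: bounded_iff)
  have "v \<in> ?K" if "t \<in> {a..b}" "v \<in> cball (u t) (r/2)" for t v
    using that by (intro image_eqI[where x="(t, v - u t)"]) (auto simp: dist_norm norm_minus_commute)
  with M show ?thesis by blast
qed

lemma solution_second_derivative:
  fixes u u1 u2 :: "real \<Rightarrow> 'a::real_normed_vector" and L D :: "'a \<Rightarrow>\<^sub>L 'a"
  assumes "a < b" and t: "t \<in> {a..b}"
    and u: "(u has_vector_derivative u1 t) (at t within {a..b})"
    and u1: "(u1 has_vector_derivative u2 t) (at t within {a..b})"
    and ode: "\<And>s. s \<in> {a..b} \<Longrightarrow> u1 s = blinfun_apply L (u s) + N (u s)"
    and N: "(N has_derivative blinfun_apply D) (at (u t))"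
  shows "u2 t = blinfun_apply L (u1 t) + blinfun_apply D (u1 t)"
proof -
  have du: "(u has_derivative (\<lambda>s. s *\<^sub>R u1 t)) (at t within {a..b})"
    using u by (simp add: has_vector_derivative_def)
  have "((\<lambda>s. blinfun_apply L (u s)) has_derivative (\<lambda>s. blinfun_apply L (s *\<^sub>R u1 t))) (at t within {a..b})"
    using diff_chain_within[OF du bounded_linear_imp_has_derivative[OF blinfun.bounded_linear_right]]
    by (simp add: o_def)
  moreover have "((\<lambda>s. N (u s)) has_derivative (\<lambda>s. blinfun_apply D (s *\<^sub>R u1 t))) (at t within {a..b})"
    using diff_chain_within[OF du has_derivative_at_withinI[OF N]] by (simp add: o_def)
  ultimately have "((\<lambda>s. blinfun_apply L (u s) + N (u s)) has_vector_derivative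
      blinfun_apply L (u1 t) + blinfun_apply D (u1 t)) (at t within {a..b})"
    unfolding has_vector_derivative_def
    by (auto dest: has_derivative_add simp: blinfun.scaleR_right scaleR_right_distrib)
  then have "(u1 has_vector_derivative blinfun_apply L (u1 t) + blinfun_apply D (u1 t)) (at t within {a..b})"
    by (rule has_vector_derivative_transform[OF t, rotated]) (simp add: ode)
  with u1 show ?thesis
    using vector_derivative_unique_within_closed_interval[OF \<open>a < b\<close>] t by (simp add: box_real)
qed

lemma solution_taylor_expansion:
  fixes u u1 u2 u3 :: "real \<Rightarrow> 'a::real_normed_vector" and L D :: "'a \<Rightarrow>\<^sub>L 'a"
  assumes "a < b"
    and u: "\<And>s. s \<in> {a..b} \<Longrightarrow> (u has_vector_derivative u1 s) (at s within {a..b})"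
    and u1: "\<And>s. s \<in> {a..b} \<Longrightarrow> (u1 has_vector_derivative u2 s) (at s within {a..b})"
    and u2: "\<And>s. s \<in> {a..b} \<Longrightarrow> (u2 has_vector_derivative u3 s) (at s within {a..b})"
    and B: "\<And>s. s \<in> {a..b} \<Longrightarrow> norm (u3 s) \<le> B"
    and ode: "\<And>s. s \<in> {a..b} \<Longrightarrow> u1 s = blinfun_apply L (u s) + N (u s)"
    and N: "(N has_derivative blinfun_apply D) (at (u t))"
    and t: "a \<le> t" "t + h \<le> b" "0 \<le> h"
  shows "norm (u (t + h) - u t - h *\<^sub>R u1 t
                - (h\<^sup>2/2) *\<^sub>R (blinfun_apply L (u1 t) + blinfun_apply D (u1 t))) \<le> B * h ^ 3"
proof -
  have sub: "{t..t + h} \<subseteq> {a..b}" and t': "t \<in> {a..b}" using t by auto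
  have "u2 t = blinfun_apply L (u1 t) + blinfun_apply D (u1 t)"
    by (rule solution_second_derivative[where N=N]) (use assms t' in auto)
  moreover have "norm (u (t + h) - u t - (t + h - t) *\<^sub>R u1 t - ((t + h - t)\<^sup>2/2) *\<^sub>R u2 t)
      \<le> B * (t + h - t) ^ 3"
    using sub t by (intro taylor2_remainder_bound)
      (auto intro: B has_vector_derivative_within_subset[OF u] has_vector_derivative_within_subset[OF u1]
         has_vector_derivative_within_subset[OF u2])
  ultimately show ?thesis by simp
qed

lemma norm_scaleR_le:
  assumes "0 \<le> c" "norm x \<le> b"
  shows "norm (c *\<^sub>R x) \<le> c * b"
  using mult_left_mono[OF assms(2,1)] assms(1) by simp

lemma norm_blinfun_apply_le:
  assumes "norm A \<le> a" "norm x \<le> c"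
  shows "norm (blinfun_apply A x) \<le> a * c"
  using norm_blinfun[of A x] mult_mono[OF assms order_trans[OF norm_ge_zero assms(1)] norm_ge_zero]
  by linarith

text \<open>The first four terms are the \<open>O(h\<^sup>3)\<close> defects of the scheme, the last one is the
  Taylor remainder of the exact solution.\<close>
lemma himexp2_defect_decomposition:
  fixes L J :: "'a::real_normed_vector \<Rightarrow>\<^sub>L 'a"
  assumes "F = w - (h/2) *\<^sub>R blinfun_apply L w"
  shows "(un + h *\<^sub>R w + (2*h) *\<^sub>R P) - ut1 =
      (h\<^sup>2/2) *\<^sub>R blinfun_apply L ((h/2) *\<^sub>R blinfun_apply L w)
    + (h\<^sup>2/2) *\<^sub>R blinfun_apply J ((h/2) *\<^sub>R blinfun_apply L w)
    + h *\<^sub>R (D - blinfun_apply J ((h/2) *\<^sub>R w))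
    + (2*h) *\<^sub>R (P - (1/2) *\<^sub>R D)
    - (ut1 - un - h *\<^sub>R F - (h\<^sup>2/2) *\<^sub>R (blinfun_apply L F + blinfun_apply J F))"
  unfolding assms
  by (simp add: blinfun.diff_right blinfun.scaleR_right blinfun.add_right algebra_simps power2_eq_square)

lemma himexp2_step_local_error:
  fixes L :: "(complex^'n) \<Rightarrow>\<^sub>L (complex^'n)"
  assumes F: "blinfun_apply L un + N un = F" "norm F \<le> B"
    and exact: "norm (ut1 - un - h *\<^sub>R F - (h\<^sup>2/2) *\<^sub>R (blinfun_apply L F + blinfun_apply (N' un) F))
                  \<le> B * h ^ 3"
    and h: "0 < h" "h \<le> 1" "h * norm L \<le> 1" "h * B \<le> r"
    and N: "\<And>y. y \<in> cball un r \<Longrightarrow> (N has_derivative blinfun_apply (N' y)) (at y)"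
    and N': "\<And>y. y \<in> cball un r \<Longrightarrow> (N' has_derivative blinfun_apply (N'' y)) (at y)"
    and M1: "\<And>y. y \<in> cball un r \<Longrightarrow> norm (N' y) \<le> M1"
    and M2: "\<And>y. y \<in> cball un r \<Longrightarrow> norm (N'' y) \<le> M2"
    and A: "norm (A un) \<le> KA"
  shows "norm (himexp2_step L N A h un - ut1)
    \<le> ((norm L)\<^sup>2 * B / 2 + M1 * norm L * B / 2 + M2 * B\<^sup>2 + 2 * KA * exp KA * M1 * B + B) * h ^ 3"
proof -
  define w where "w = resolv h L F"
  define D where "D = N (un + (h/2) *\<^sub>R w) - N un"
  define P where "P = phi2 (h *\<^sub>R A un) D"
  have wF: "F = w - (h/2) *\<^sub>R blinfun_apply L w"
    using resolv_solves[of h L F] h unfolding w_def by simp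
  have nw: "norm ((h/2) *\<^sub>R w) \<le> h * B"
    using norm_resolv_le[of h L F] h F(2) unfolding w_def by simp
  have nLw: "norm ((h/2) *\<^sub>R blinfun_apply L w) \<le> h * norm L * B"
    using norm_blinfun_apply_le[OF order_refl nw, of L] h by (simp add: blinfun.scaleR_right algebra_simps)
  have un: "un \<in> cball un r"
    using order_trans[OF norm_ge_zero order_trans[OF nw h(4)]] by simp
  have KA0: "0 \<le> KA"
    using A norm_ge_zero order_trans by blast
  obtain nD: "norm D \<le> M1 * (h * B)"
    and E: "norm (D - blinfun_apply (N' un) ((h/2) *\<^sub>R w)) \<le> M2 * (h * B)\<^sup>2"
    using norm_nonlinear_increment_le[OF N N' M1 M2 nw h(4)] unfolding D_def by blast
  have "norm (P - (1/2) *\<^sub>R D) \<le> h * KA * exp KA * norm D"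
    unfolding P_def using h by (intro norm_phi2_scaled_minus_half_le A) auto
  also have "\<dots> \<le> h * KA * exp KA * (M1 * (h * B))"
    using nD h(1) KA0 by (intro mult_left_mono) auto
  finally have X4: "norm ((2*h) *\<^sub>R (P - (1/2) *\<^sub>R D)) \<le> 2 * h * (h * KA * exp KA * (M1 * (h * B)))"
    using h(1) by (intro norm_scaleR_le) auto
  have X3: "norm (h *\<^sub>R (D - blinfun_apply (N' un) ((h/2) *\<^sub>R w))) \<le> h * (M2 * (h * B)\<^sup>2)"
    using h(1) E by (intro norm_scaleR_le) auto
  have X1: "norm ((h\<^sup>2/2) *\<^sub>R blinfun_apply L ((h/2) *\<^sub>R blinfun_apply L w)) \<le> h\<^sup>2/2 * (norm L * (h * norm L * B))"
    by (intro norm_scaleR_le norm_blinfun_apply_le[OF order_refl nLw]) simp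
  have X2: "norm ((h\<^sup>2/2) *\<^sub>R blinfun_apply (N' un) ((h/2) *\<^sub>R blinfun_apply L w)) \<le> h\<^sup>2/2 * (M1 * (h * norm L * B))"
    using un by (intro norm_scaleR_le norm_blinfun_apply_le[OF M1 nLw]) auto
  have step: "himexp2_step L N A h un = un + h *\<^sub>R w + (2*h) *\<^sub>R P"
    unfolding himexp2_step_def Let_def F(1) w_def[symmetric] D_def[symmetric] P_def[symmetric] by simp
  have "norm (himexp2_step L N A h un - ut1)
      \<le> h\<^sup>2/2 * (norm L * (h * norm L * B)) + h\<^sup>2/2 * (M1 * (h * norm L * B)) + h * (M2 * (h * B)\<^sup>2)
         + 2 * h * (h * KA * exp KA * (M1 * (h * B))) + B * h ^ 3"
    unfolding step himexp2_defect_decomposition[OF wF, where J="N' un" and D=D]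
    by (intro order_trans[OF norm_triangle_ineq4] add_mono order_trans[OF norm_triangle_ineq]
        X1 X2 X3 X4 exact)
  then show ?thesis by (simp add: power2_eq_square power3_eq_cube algebra_simps)
qed

lemma obtain_small_step:
  fixes a b c :: real
  assumes "0 \<le> a" "0 \<le> b" "0 < c"
  obtains h0 where "0 < h0" "h0 \<le> 1" "h0 * a \<le> 1" "h0 * b \<le> c"
proof
  let ?h0 = "min 1 (min (1 / (a + 1)) (c / (b + 1)))"
  show "0 < ?h0" "?h0 \<le> 1"
    using assms by auto
  have "?h0 * a \<le> 1 / (a + 1) * (a + 1)" "?h0 * b \<le> c / (b + 1) * (b + 1)"
    using assms by (intro mult_mono; simp)+
  then show "?h0 * a \<le> 1" "?h0 * b \<le> c"
    using assms by simp_all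
qed

lemma himexp2_step_consistency:
  fixes L :: "(complex^'n) \<Rightarrow>\<^sub>L (complex^'n)"
    and N :: "complex^'n \<Rightarrow> complex^'n"
    and N' :: "complex^'n \<Rightarrow> ((complex^'n) \<Rightarrow>\<^sub>L (complex^'n))"
    and u u1 u2 u3 :: "real \<Rightarrow> complex^'n"
  assumes T: "t0 < T"
    and d1: "\<And>t. t \<in> {t0..T} \<Longrightarrow> (u has_vector_derivative u1 t) (at t within {t0..T})"
    and d2: "\<And>t. t \<in> {t0..T} \<Longrightarrow> (u1 has_vector_derivative u2 t) (at t within {t0..T})"
    and d3: "\<And>t. t \<in> {t0..T} \<Longrightarrow> (u2 has_vector_derivative u3 t) (at t within {t0..T})"
    and B1: "\<And>t. t \<in> {t0..T} \<Longrightarrow> norm (u1 t) \<le> B"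
    and B3: "\<And>t. t \<in> {t0..T} \<Longrightarrow> norm (u3 t) \<le> B"
    and ode: "\<And>t. t \<in> {t0..T} \<Longrightarrow> u1 t = blinfun_apply L (u t) + N (u t)"
    and \<delta>: "\<delta> > 0"
    and DN: "\<And>v. (\<exists>t\<in>{t0..T}. dist v (u t) < \<delta>) \<Longrightarrow> (N has_derivative blinfun_apply (N' v)) (at v)"
    and DN': "\<And>v. (\<exists>t\<in>{t0..T}. dist v (u t) < \<delta>) \<Longrightarrow> (N' has_derivative blinfun_apply (N'' v)) (at v)"
    and contN'': "continuous_on {v. \<exists>t\<in>{t0..T}. dist v (u t) < \<delta>} N''"
  obtains C h0 K where "0 < h0" "\<And>t. t \<in> {t0..T} \<Longrightarrow> norm (N' (u t)) \<le> K"
    and "\<And>A h t. norm (A (u t)) \<le> norm L + K \<Longrightarrow> 0 < h \<Longrightarrow> h \<le> h0 \<Longrightarrow> t0 \<le> t \<Longrightarrow> t + h \<le> T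
      \<Longrightarrow> norm (himexp2_step L N A h (u t) - u (t + h)) \<le> C * h ^ 3"
proof -
  let ?tube = "{v. \<exists>t\<in>{t0..T}. dist v (u t) < \<delta>}"
  have u_cont: "continuous_on {t0..T} u"
    using d1 has_vector_derivative_continuous continuous_on_eq_continuous_within by blast
  have "continuous_on ?tube N'"
    by (rule continuous_at_imp_continuous_on) (use DN' has_derivative_continuous in blast)
  then obtain M1 where M1: "\<forall>t\<in>{t0..T}. \<forall>v\<in>cball (u t) (\<delta>/2). norm (N' v) \<le> M1"
    using bounded_on_tube[OF u_cont \<delta>] by blast
  obtain M2 where M2: "\<forall>t\<in>{t0..T}. \<forall>v\<in>cball (u t) (\<delta>/2). norm (N'' v) \<le> M2"
    using bounded_on_tube[OF u_cont \<delta> contN''] by blast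
  have in_tube: "v \<in> ?tube" if "t \<in> {t0..T}" "v \<in> cball (u t) (\<delta>/2)" for t v
    using that \<delta> by (intro CollectI bexI[of _ t]) (auto simp: dist_commute)
  define KA where "KA = norm L + M1"
  define C where "C = (norm L)\<^sup>2 * B / 2 + M1 * norm L * B / 2 + M2 * B\<^sup>2 + 2 * KA * exp KA * M1 * B + B"
  have "0 \<le> B"
    using B1[of t0] T by (meson atLeastAtMost_iff less_imp_le norm_ge_zero order_refl order_trans)
  then obtain h0 where h0: "0 < h0" "h0 \<le> 1" "h0 * norm L \<le> 1" "h0 * B \<le> \<delta>/2"
    using obtain_small_step[OF norm_ge_zero[of L] _ half_gt_zero[OF \<delta>]] by blast
  have local_error: "norm (himexp2_step L N A h (u t) - u (t + h)) \<le> C * h ^ 3"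
    if A: "norm (A (u t)) \<le> norm L + M1" and h: "0 < h" "h \<le> h0" and t: "t0 \<le> t" "t + h \<le> T" for A h t
  proof -
    have tI: "t \<in> {t0..T}" using t h by auto
    have h': "h \<le> 1" "h * norm L \<le> 1" "h * B \<le> \<delta>/2"
      using h h0 \<open>0 \<le> B\<close> mult_right_mono[of h h0 "norm L"] mult_right_mono[of h h0 B] by auto
    have "norm (u (t + h) - u t - h *\<^sub>R u1 t
        - (h\<^sup>2/2) *\<^sub>R (blinfun_apply L (u1 t) + blinfun_apply (N' (u t)) (u1 t))) \<le> B * h ^ 3"
      using tI B3 t h DN[OF bexI[OF _ tI]] \<delta>
      by (intro solution_taylor_expansion[OF T d1 d2 d3 _ ode]) auto
    from himexp2_step_local_error[where N=N and N'=N' and N''=N'' and un="u t" and A=A and r="\<delta>/2",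
        OF ode[OF tI, symmetric] _ this h(1) h'] show ?thesis
      unfolding C_def using tI B1 M1 M2 in_tube DN DN' A[folded KA_def] by auto
  qed
  have "norm (N' (u t)) \<le> M1" if "t \<in> {t0..T}" for t
    using M1 that \<delta> by auto
  with h0(1) local_error show ?thesis
    using that by blast
qed

theorem lemma4p1:
  fixes L :: "(complex^'n) \<Rightarrow>\<^sub>L (complex^'n)"
    and N :: "complex^'n \<Rightarrow> complex^'n"
    and N' :: "complex^'n \<Rightarrow> ((complex^'n) \<Rightarrow>\<^sub>L (complex^'n))"
    and N'' :: "complex^'n \<Rightarrow> ((complex^'n) \<Rightarrow>\<^sub>L ((complex^'n) \<Rightarrow>\<^sub>L (complex^'n)))"
    and u u1 u2 u3 :: "real \<Rightarrow> complex^'n"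
    and t0 T :: real and u0 :: "complex^'n" and \<delta> :: real
  assumes T: "t0 < T"
    and L_complex_linear: "\<And>(c::complex) v. blinfun_apply L (c *s v) = c *s blinfun_apply L v"
    and dissipative: "\<And>v. v \<bullet> blinfun_apply L v \<le> 0"
    \<comment> \<open>the exact solution, three times differentiable with uniformly bounded derivatives\<close>
    and init: "u t0 = u0"
    and d1: "\<And>t. t \<in> {t0..T} \<Longrightarrow> (u has_vector_derivative u1 t) (at t within {t0..T})"
    and d2: "\<And>t. t \<in> {t0..T} \<Longrightarrow> (u1 has_vector_derivative u2 t) (at t within {t0..T})"
    and d3: "\<And>t. t \<in> {t0..T} \<Longrightarrow> (u2 has_vector_derivative u3 t) (at t within {t0..T})"
    and bnd: "\<exists>B. \<forall>t\<in>{t0..T}. norm (u1 t) \<le> B \<and> norm (u2 t) \<le> B \<and> norm (u3 t) \<le> B"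
    and ode: "\<And>t. t \<in> {t0..T} \<Longrightarrow> u1 t = blinfun_apply L (u t) + N (u t)"
    \<comment> \<open>N twice continuously Frechet differentiable in a strip along the exact solution\<close>
    and \<delta>: "\<delta> > 0"
    and DN: "\<And>v. (\<exists>t\<in>{t0..T}. dist v (u t) < \<delta>) \<Longrightarrow> (N has_derivative blinfun_apply (N' v)) (at v)"
    and DN': "\<And>v. (\<exists>t\<in>{t0..T}. dist v (u t) < \<delta>) \<Longrightarrow> (N' has_derivative blinfun_apply (N'' v)) (at v)"
    and contN'': "continuous_on {v. \<exists>t\<in>{t0..T}. dist v (u t) < \<delta>} N''"
    \<comment> \<open>L (d/dt N(u(t))) uniformly bounded\<close>
    and LdN: "\<exists>M. \<forall>t\<in>{t0..T}. norm (blinfun_apply L (blinfun_apply (N' (u t)) (u1 t))) \<le> M"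
  shows "\<exists>C h0. h0 > 0 \<and> (\<forall>h (n::nat). 0 < h \<longrightarrow> h \<le> h0 \<longrightarrow> t0 + real (Suc n) * h \<le> T \<longrightarrow>
            norm (himexp2J_step L N N' h (u (t0 + real n * h)) - u (t0 + real (Suc n) * h)) \<le> C * h ^ 3 \<and>
            norm (himexp2N_step L N N' h (u (t0 + real n * h)) - u (t0 + real (Suc n) * h)) \<le> C * h ^ 3)"
proof -
  obtain B where "\<forall>t\<in>{t0..T}. norm (u1 t) \<le> B \<and> norm (u2 t) \<le> B \<and> norm (u3 t) \<le> B"
    using bnd by blast
  then obtain C h0 K where "0 < h0" and K: "\<And>t. t \<in> {t0..T} \<Longrightarrow> norm (N' (u t)) \<le> K"
    and local_error: "\<And>A h t. norm (A (u t)) \<le> norm L + K \<Longrightarrow> 0 < h \<Longrightarrow> h \<le> h0 \<Longrightarrow> t0 \<le> t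
      \<Longrightarrow> t + h \<le> T \<Longrightarrow> norm (himexp2_step L N A h (u t) - u (t + h)) \<le> C * h ^ 3"
    using himexp2_step_consistency[OF T d1 d2 d3 _ _ ode \<delta> DN DN' contN''] by metis
  show ?thesis
  proof (intro exI conjI allI impI)
    show "0 < h0" by fact
    fix h :: real and n :: nat
    define t where "t = t0 + real n * h"
    assume h: "0 < h" "h \<le> h0" and "t0 + real (Suc n) * h \<le> T"
    then have t: "t0 \<le> t" "t + h \<le> T" and step_time: "t0 + real (Suc n) * h = t + h"
      unfolding t_def by (auto simp: algebra_simps)
    then have "norm (N' (u t)) \<le> K"
      using K h by auto
    then have "norm (L + N' (u t)) \<le> norm L + K" "norm (N' (u t)) \<le> norm L + K"
      using norm_triangle_ineq[of L "N' (u t)"] norm_ge_zero[of L] by linarith+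
    then show "norm (himexp2J_step L N N' h (u (t0 + real n * h)) - u (t0 + real (Suc n) * h)) \<le> C * h ^ 3"
      and "norm (himexp2N_step L N N' h (u (t0 + real n * h)) - u (t0 + real (Suc n) * h)) \<le> C * h ^ 3"
      unfolding himexp2J_step_def himexp2N_step_def step_time t_def[symmetric]
      using local_error h t by auto
  qed
qed

end
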